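(* Let $\mathfrak g$ be a finite-dimensional completely solvable Lie superalgebra over $\mathbf k$. Then every proper (graded) sub-superalgebra of $\mathfrak g$ is contained in a sub-superalgebra of $\mathfrak g$ of codimension one.
   Context: $\mathbf k$ is algebraically closed of characteristic $p>2$. A Lie superalgebra $\mathfrak g$ is completely solvable if $[\mathfrak g,\mathfrak g]$ is nilpotent. Sub-superalgebras are $\mathbb Z_2$-graded subalgebras. *)

theory Defs
  imports Main "HOL-Computational_Algebra.Polynomial"
begin

definition alg_closed_field :: "'k::field itself \<Rightarrow> bool" where
  "alg_closed_field _ \<longleftrightarrow> (\<forall>q :: 'k poly. 0 < degree q \<longrightarrow> (\<exists>x. poly q x = 0))"

text \<open>A Lie superalgebra structure on the k-vector space 'v (scalar multiplication sc),
  with Z2-grading V False (even part) and V True (odd part), and bracket br.\<close>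
definition lie_superalgebra ::
  "('k::field \<Rightarrow> 'v::ab_group_add \<Rightarrow> 'v) \<Rightarrow> (bool \<Rightarrow> 'v set) \<Rightarrow> ('v \<Rightarrow> 'v \<Rightarrow> 'v) \<Rightarrow> bool" where
  "lie_superalgebra sc V br \<longleftrightarrow>
     vector_space sc \<and>
     module.subspace sc (V False) \<and> module.subspace sc (V True) \<and>
     V False \<inter> V True = {0} \<and>
     (\<forall>v. \<exists>a\<in>V False. \<exists>b\<in>V True. v = a + b) \<and>
     (\<forall>x y z. br (x + y) z = br x z + br y z) \<and>
     (\<forall>x y z. br x (y + z) = br x y + br x z) \<and>
     (\<forall>c x y. br (sc c x) y = sc c (br x y)) \<and>
     (\<forall>c x y. br x (sc c y) = sc c (br x y)) \<and>
     (\<forall>i j x y. x \<in> V i \<longrightarrow> y \<in> V j \<longrightarrow> br x y \<in> V (i \<noteq> j)) \<and>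
     (\<forall>i j x y. x \<in> V i \<longrightarrow> y \<in> V j \<longrightarrow>
        br x y = (if i \<and> j then br y x else - br y x)) \<and>
     (\<forall>i j x y z. x \<in> V i \<longrightarrow> y \<in> V j \<longrightarrow>
        br x (br y z) = br (br x y) z + (if i \<and> j then - br y (br x z) else br y (br x z))) \<and>
     (\<forall>x \<in> V True. br x (br x x) = 0)"

definition fin_dim :: "('k::field \<Rightarrow> 'v::ab_group_add \<Rightarrow> 'v) \<Rightarrow> bool" where
  "fin_dim sc \<longleftrightarrow> (\<exists>B. finite B \<and> module.span sc B = UNIV)"

definition sub_superalgebra ::
  "('k::field \<Rightarrow> 'v::ab_group_add \<Rightarrow> 'v) \<Rightarrow> (bool \<Rightarrow> 'v set) \<Rightarrow> ('v \<Rightarrow> 'v \<Rightarrow> 'v) \<Rightarrow> 'v set \<Rightarrow> bool" where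
  "sub_superalgebra sc V br S \<longleftrightarrow>
     module.subspace sc S \<and>
     (\<forall>v\<in>S. \<exists>a\<in>S \<inter> V False. \<exists>b\<in>S \<inter> V True. v = a + b) \<and>
     (\<forall>x\<in>S. \<forall>y\<in>S. br x y \<in> S)"

definition brk_sp ::
  "('k::field \<Rightarrow> 'v::ab_group_add \<Rightarrow> 'v) \<Rightarrow> ('v \<Rightarrow> 'v \<Rightarrow> 'v) \<Rightarrow> 'v set \<Rightarrow> 'v set \<Rightarrow> 'v set" where
  "brk_sp sc br A B = module.span sc {br a b | a b. a \<in> A \<and> b \<in> B}"

fun lower_central ::
  "('k::field \<Rightarrow> 'v::ab_group_add \<Rightarrow> 'v) \<Rightarrow> ('v \<Rightarrow> 'v \<Rightarrow> 'v) \<Rightarrow> 'v set \<Rightarrow> nat \<Rightarrow> 'v set" where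
  "lower_central sc br L 0 = L"
| "lower_central sc br L (Suc n) = brk_sp sc br L (lower_central sc br L n)"

definition nilpotent_sub ::
  "('k::field \<Rightarrow> 'v::ab_group_add \<Rightarrow> 'v) \<Rightarrow> ('v \<Rightarrow> 'v \<Rightarrow> 'v) \<Rightarrow> 'v set \<Rightarrow> bool" where
  "nilpotent_sub sc br L \<longleftrightarrow> (\<exists>n. lower_central sc br L n = {0})"

definition completely_solvable ::
  "('k::field \<Rightarrow> 'v::ab_group_add \<Rightarrow> 'v) \<Rightarrow> ('v \<Rightarrow> 'v \<Rightarrow> 'v) \<Rightarrow> bool" where
  "completely_solvable sc br \<longleftrightarrow> nilpotent_sub sc br (brk_sp sc br UNIV UNIV)"

end

theory Submission
  imports Defs "HOL-Library.Set_Algebras"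
begin

text \<open>
  Let \<open>N = [\<g>, \<g>]\<close> and let \<open>C\<^sub>0 = \<g>\<close>, \<open>C\<^sub>j\<^sub>+\<^sub>1\<close> be the \<open>j\<close>-th term of the lower central
  series of \<open>N\<close>. These are graded ideals with \<open>[N, C\<^sub>j] \<subseteq> C\<^sub>j\<^sub>+\<^sub>1\<close> and \<open>[C\<^sub>j, C\<^sub>j] \<subseteq> C\<^sub>j\<^sub>+\<^sub>1\<close>,
  and some \<open>C\<^sub>n\<close> vanishes since \<open>N\<close> is nilpotent. Choose \<open>j\<close> with \<open>S + C\<^sub>j = \<g>\<close> but
  \<open>M = S + C\<^sub>j\<^sub>+\<^sub>1 \<noteq> \<g>\<close>. Then \<open>M\<close> is a proper graded subalgebra, \<open>\<g> = M + C\<^sub>j\<close> with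
  \<open>[C\<^sub>j, C\<^sub>j] \<subseteq> M\<close>, and \<open>[[M, M], \<g>] \<subseteq> M\<close> because \<open>[M, M] \<subseteq> N\<close>.
  So modulo any \<open>ad M\<close>-stable subspace containing \<open>M\<close> the even elements of \<open>M\<close> act by
  commuting operators and each odd \<open>b\<close> by an operator of square \<open>ad [b, b] / 2 = 0\<close>.
  Over an algebraically closed field of characteristic \<open>\<noteq> 2\<close> this lets us enlarge \<open>M\<close>
  one dimension at a time through graded \<open>ad M\<close>-stable subspaces up to a hyperplane \<open>H\<close>,
  and \<open>H\<close> is a subalgebra since \<open>\<g> = M + C\<^sub>j\<close> and \<open>[C\<^sub>j, C\<^sub>j] \<subseteq> M\<close>.
\<close>

definition poly_apply ::
  "('k::field \<Rightarrow> 'v::ab_group_add \<Rightarrow> 'v) \<Rightarrow> ('v \<Rightarrow> 'v) \<Rightarrow> 'k poly \<Rightarrow> 'v \<Rightarrow> 'v" where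
  "poly_apply sc T q w = (\<Sum>i\<le>degree q. sc (coeff q i) ((T ^^ i) w))"

context vector_space
begin

lemma poly_apply_eq_sum:
  assumes "degree q \<le> n"
  shows "poly_apply (*s) T q w = (\<Sum>i\<le>n. coeff q i *s (T ^^ i) w)"
  unfolding poly_apply_def
  by (rule sum.mono_neutral_left) (use assms in \<open>auto simp: coeff_eq_0\<close>)

lemma poly_apply_add: "poly_apply (*s) T (p + q) w = poly_apply (*s) T p w + poly_apply (*s) T q w"
proof -
  define n where "n = max (degree p) (degree q)"
  have "degree (p + q) \<le> n" "degree p \<le> n" "degree q \<le> n"
    using degree_add_le_max[of p q] unfolding n_def by auto
  then show ?thesis by (simp add: poly_apply_eq_sum[where n=n] sum.distrib scale_left_distrib)
qed

lemma poly_apply_smult: "poly_apply (*s) T (smult c p) w = c *s poly_apply (*s) T p w"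
  by (simp add: poly_apply_eq_sum[OF degree_smult_le] poly_apply_def scale_sum_right)

lemma poly_apply_diff: "poly_apply (*s) T (p - q) w = poly_apply (*s) T p w - poly_apply (*s) T q w"
  using poly_apply_add[of T p "smult (-1) q" w] poly_apply_smult[of T "-1" q w] by simp

lemma poly_apply_monom: "poly_apply (*s) T (monom a k) w = a *s (T ^^ k) w"
  by (simp add: poly_apply_eq_sum[OF degree_monom_le] coeff_monom if_distrib[of "\<lambda>c. c *s _"]
      cong: if_cong)

lemma poly_apply_0 [simp]: "poly_apply (*s) T 0 w = 0"
  by (simp add: poly_apply_def)

lemma poly_apply_sum: "poly_apply (*s) T (\<Sum>i\<in>A. p i) w = (\<Sum>i\<in>A. poly_apply (*s) T (p i) w)"
  by (induction A rule: infinite_finite_induct) (simp_all add: poly_apply_add)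

lemma poly_apply_pCons_0:
  assumes "Vector_Spaces.linear (*s) (*s) T"
  shows "poly_apply (*s) T (pCons 0 p) w = T (poly_apply (*s) T p w)"
proof -
  interpret T: Vector_Spaces.linear "(*s)" "(*s)" T by fact
  have "poly_apply (*s) T (pCons 0 p) w = (\<Sum>i\<le>Suc (degree p). coeff (pCons 0 p) i *s (T ^^ i) w)"
    by (rule poly_apply_eq_sum) (simp add: degree_pCons_le)
  also have "\<dots> = (\<Sum>i\<le>degree p. coeff p i *s T ((T ^^ i) w))"
    by (simp add: sum.atMost_Suc_shift del: sum.atMost_Suc)
  also have "\<dots> = T (poly_apply (*s) T p w)"
    by (simp add: poly_apply_def T.sum T.scale)
  finally show ?thesis .
qed

lemma poly_apply_linear_factor:
  assumes "Vector_Spaces.linear (*s) (*s) T"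
  shows "poly_apply (*s) T ([:-c, 1:] * r) w = T (poly_apply (*s) T r w) - c *s poly_apply (*s) T r w"
  by (simp add: poly_apply_diff poly_apply_smult poly_apply_pCons_0[OF assms])

lemma eigenvector_mod_subspace_of_poly_apply:
  assumes "alg_closed_field TYPE('a)" "Vector_Spaces.linear (*s) (*s) T" "subspace U"
  shows "q \<noteq> 0 \<Longrightarrow> w \<notin> U \<Longrightarrow> poly_apply (*s) T q w \<in> U \<Longrightarrow> \<exists>v c. v \<notin> U \<and> T v - c *s v \<in> U"
proof (induction "degree q" arbitrary: q rule: less_induct)
  case less
  show ?case
  proof (cases "degree q = 0")
    case True
    then have "coeff q 0 *s w \<in> U" "coeff q 0 \<noteq> 0"
      using less.prems leading_coeff_0_iff[of q] by (auto simp: poly_apply_def)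
    then have "w \<in> U" using subspace_scale[OF assms(3), where c="inverse (coeff q 0)"] by force
    then show ?thesis using less.prems(2) by blast
  next
    case False
    then obtain c where "poly q c = 0" using assms(1) unfolding alg_closed_field_def by blast
    then obtain r where r: "q = [:-c, 1:] * r" by (metis dvdE poly_eq_0_iff_dvd)
    with less.prems(1) have "r \<noteq> 0" by auto
    with r have "degree r < degree q" using degree_mult_eq[of "[:-c, 1:]" r] by simp
    show ?thesis
    proof (cases "poly_apply (*s) T r w \<in> U")
      case True
      then show ?thesis using less.hyps \<open>r \<noteq> 0\<close> \<open>degree r < degree q\<close> less.prems(2) by blast
    next
      case False
      then show ?thesis
        using less.prems(3) unfolding r poly_apply_linear_factor[OF assms(2)] by blast
    qed
  qed
qed

end

context finite_dimensional_vector_space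
begin

lemma exists_annihilating_poly: "\<exists>q. q \<noteq> 0 \<and> poly_apply (*s) T q w = 0"
proof -
  define f where "f i = (T ^^ i) w" for i
  define d where "d = dim (UNIV :: 'b set)"
  show ?thesis
  proof (cases "inj_on f {..d}")
    case True
    have "card (f ` {..d}) = Suc d" using card_image[OF True] by simp
    moreover have "dim (f ` {..d}) \<le> d" using dim_subset[of _ UNIV] d_def by simp
    ultimately have "dependent (f ` {..d})" by (intro dependent_biggerset_general) auto
    then obtain u where u: "\<exists>v\<in>f ` {..d}. u v \<noteq> 0" "(\<Sum>v\<in>f ` {..d}. u v *s v) = 0"
      using dependent_finite[of "f ` {..d}"] by blast
    define q where "q = (\<Sum>i\<le>d. monom (u (f i)) i)"
    obtain i where "i \<le> d" "u (f i) \<noteq> 0" using u(1) by auto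
    then have "coeff q i \<noteq> 0" by (simp add: q_def coeff_sum)
    have "poly_apply (*s) T q w = (\<Sum>i\<le>d. u (f i) *s f i)"
      by (simp add: q_def poly_apply_sum poly_apply_monom f_def)
    also have "\<dots> = (\<Sum>v\<in>f ` {..d}. u v *s v)"
      by (simp add: sum.reindex[OF True])
    finally have "poly_apply (*s) T q w = 0" using u(2) by simp
    with \<open>coeff q i \<noteq> 0\<close> show ?thesis by (intro exI[of _ q]) auto
  next
    case False
    then obtain i j where "i \<noteq> j" "f i = f j" unfolding inj_on_def by auto
    define q where "q = monom (1::'a) i - monom 1 j"
    have "coeff q i \<noteq> 0" using \<open>i \<noteq> j\<close> by (simp add: q_def)
    moreover have "poly_apply (*s) T q w = 0"
      using \<open>f i = f j\<close> by (simp add: q_def poly_apply_diff poly_apply_monom f_def)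
    ultimately show ?thesis by (intro exI[of _ q]) auto
  qed
qed

lemma exists_eigenvector_mod_subspace:
  assumes "alg_closed_field TYPE('a)" "Vector_Spaces.linear (*s) (*s) T" "subspace U" "U \<noteq> UNIV"
  shows "\<exists>v c. v \<notin> U \<and> T v - c *s v \<in> U"
proof -
  obtain w where "w \<notin> U" using assms(4) by blast
  moreover obtain q where "q \<noteq> 0" "poly_apply (*s) T q w = 0" using exists_annihilating_poly by blast
  ultimately show ?thesis
    using eigenvector_mod_subspace_of_poly_apply[OF assms(1-3)] subspace_0[OF assms(3)] by metis
qed

end

locale fd_lie_superalgebra = finite_dimensional_vector_space sc Basis
  for sc :: "'k::field \<Rightarrow> 'v::ab_group_add \<Rightarrow> 'v" and Basis :: "'v set" +
  fixes V :: "bool \<Rightarrow> 'v set" and br :: "'v \<Rightarrow> 'v \<Rightarrow> 'v"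
  assumes V_subspace: "subspace (V i)"
    and homogeneous_eq_0: "x \<in> V False \<Longrightarrow> x \<in> V True \<Longrightarrow> x = 0"
    and homogeneous_decomp: "\<exists>a\<in>V False. \<exists>b\<in>V True. v = a + b"
    and br_add_left: "br (x + y) z = br x z + br y z"
    and br_add_right: "br x (y + z) = br x y + br x z"
    and br_scale_right: "br x (sc c y) = sc c (br x y)"
    and br_grade: "x \<in> V i \<Longrightarrow> y \<in> V j \<Longrightarrow> br x y \<in> V (i \<noteq> j)"
    and br_supercomm: "x \<in> V i \<Longrightarrow> y \<in> V j \<Longrightarrow> br x y = (if i \<and> j then br y x else - br y x)"
    and br_jacobi: "x \<in> V i \<Longrightarrow> y \<in> V j \<Longrightarrow>
      br x (br y z) = br (br x y) z + (if i \<and> j then - br y (br x z) else br y (br x z))"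

lemma fd_lie_superalgebraI:
  assumes lie: "lie_superalgebra sc V br" and fin: "finite_dimensional_vector_space sc B"
  shows "fd_lie_superalgebra sc B V br"
proof -
  note ax = lie[unfolded lie_superalgebra_def]
  show ?thesis
  proof (intro fd_lie_superalgebra.intro fin fd_lie_superalgebra_axioms.intro)
    show "module.subspace sc (V i)" for i using ax by (cases i) auto
    show "x \<in> V False \<Longrightarrow> x \<in> V True \<Longrightarrow> x = 0" for x using ax by (elim conjE) blast
    show "\<exists>a\<in>V False. \<exists>b\<in>V True. v = a + b" for v using ax by (elim conjE) meson
    show "br (x + y) z = br x z + br y z" for x y z using ax by (elim conjE) meson
    show "br x (y + z) = br x y + br x z" for x y z using ax by (elim conjE) meson
    show "br x (sc c y) = sc c (br x y)" for x c y using ax by (elim conjE) meson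
    show "x \<in> V i \<Longrightarrow> y \<in> V j \<Longrightarrow> br x y \<in> V (i \<noteq> j)" for x y i j using ax by (elim conjE) meson
    show "x \<in> V i \<Longrightarrow> y \<in> V j \<Longrightarrow> br x y = (if i \<and> j then br y x else - br y x)" for x y i j
      using ax by (elim conjE) meson
    show "x \<in> V i \<Longrightarrow> y \<in> V j \<Longrightarrow>
      br x (br y z) = br (br x y) z + (if i \<and> j then - br y (br x z) else br y (br x z))" for x y z i j
      using ax by (elim conjE) meson
  qed
qed

context fd_lie_superalgebra
begin

lemma br_0_right [simp]: "br x 0 = 0"
  using br_add_right[of x 0 0] by simp

lemma br_minus_right: "br x (- y) = - br x y"
  using br_add_right[of x y "- y"] by (simp add: neg_eq_iff_add_eq_0[symmetric])

lemma br_diff_right: "br x (y - z) = br x y - br x z"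
  using br_add_right[of x y "- z"] by (simp add: br_minus_right)

lemma linear_br_minus_scale: "Vector_Spaces.linear sc sc (\<lambda>v. br x v - sc c v)"
  unfolding Vector_Spaces.linear_iff using vector_space_axioms
  by (simp add: br_add_right br_scale_right scale_right_diff_distrib algebra_simps)

definition graded :: "'v set \<Rightarrow> bool" where
  "graded W \<longleftrightarrow> (\<forall>x\<in>W. \<exists>a\<in>W \<inter> V False. \<exists>b\<in>W \<inter> V True. x = a + b)"

lemma gradedD:
  assumes "graded W" "x \<in> W"
  obtains a b where "a \<in> W" "a \<in> V False" "b \<in> W" "b \<in> V True" "x = a + b"
  using assms unfolding graded_def by blast

lemma graded_components:
  assumes "graded W" "x \<in> W" "a \<in> V False" "b \<in> V True" "x = a + b"
  shows "a \<in> W" "b \<in> W"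
proof -
  obtain a' b' where a': "a' \<in> W" "a' \<in> V False" and b': "b' \<in> W" "b' \<in> V True"
    and "x = a' + b'" using gradedD[OF assms(1,2)] .
  with assms(5) have "a - a' = b' - b" by (simp add: algebra_simps)
  moreover have "a - a' \<in> V False" "b' - b \<in> V True"
    using subspace_diff[OF V_subspace] assms(3,4) a' b' by blast+
  ultimately have "a = a'" "b = b'" using homogeneous_eq_0 by force+
  with a' b' show "a \<in> W" "b \<in> W" by auto
qed

lemma graded_UNIV: "graded UNIV"
  using homogeneous_decomp unfolding graded_def by blast

lemma graded_span:
  assumes "G \<subseteq> V False \<union> V True"
  shows "graded (span G)"
  unfolding graded_def
proof
  fix x assume "x \<in> span G"
  then show "\<exists>a\<in>span G \<inter> V False. \<exists>b\<in>span G \<inter> V True. x = a + b"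
  proof (induction rule: span_induct_alt)
    case base
    then show ?case using span_zero subspace_0[OF V_subspace] by force
  next
    case (step c g y)
    then obtain a b where ab: "a \<in> span G" "a \<in> V False" "b \<in> span G" "b \<in> V True" "y = a + b"
      by blast
    have cg: "sc c g \<in> span G" using step(1) by (simp add: span_base span_scale)
    consider "sc c g \<in> V False" | "sc c g \<in> V True"
      using step(1) assms subspace_scale[OF V_subspace] by blast
    then show ?case
    proof cases
      case 1
      then show ?thesis using ab cg
        by (intro bexI[of _ "sc c g + a"] bexI[of _ b])
          (auto simp: add.assoc intro: span_add subspace_add[OF V_subspace])
    next
      case 2
      then show ?thesis using ab cg
        by (intro bexI[of _ a] bexI[of _ "sc c g + b"])
          (auto simp: algebra_simps intro: span_add subspace_add[OF V_subspace])
    qed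
  qed
qed

lemma graded_set_plus:
  assumes "graded A" "graded B"
  shows "graded (A + B)"
  unfolding graded_def
proof
  fix x assume "x \<in> A + B"
  then obtain a b where x: "x = a + b" "a \<in> A" "b \<in> B" by (auto elim: set_plus_elim)
  obtain a0 a1 where a: "a0 \<in> A" "a0 \<in> V False" "a1 \<in> A" "a1 \<in> V True" "a = a0 + a1"
    using gradedD[OF assms(1) x(2)] .
  obtain b0 b1 where b: "b0 \<in> B" "b0 \<in> V False" "b1 \<in> B" "b1 \<in> V True" "b = b0 + b1"
    using gradedD[OF assms(2) x(3)] .
  have "a0 + b0 \<in> V False" "a1 + b1 \<in> V True" using a b subspace_add[OF V_subspace] by blast+
  moreover have "x = (a0 + b0) + (a1 + b1)" using x a b by (simp add: algebra_simps)
  ultimately show "\<exists>a\<in>(A + B) \<inter> V False. \<exists>b\<in>(A + B) \<inter> V True. x = a + b"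
    using a b by blast
qed

lemma subspace_set_plus:
  assumes "subspace A" "subspace B"
  shows "subspace (A + B)"
proof -
  have "A + B = {x + y | x y. x \<in> A \<and> y \<in> B}" by (auto simp: set_plus_def)
  then show ?thesis using subspace_sums[OF assms] by simp
qed

lemma subspace_br_preimage:
  assumes "subspace W"
  shows "subspace {v. br x v - sc c v \<in> W}"
proof -
  interpret f: Vector_Spaces.linear sc sc "\<lambda>v. br x v - sc c v" by (rule linear_br_minus_scale)
  show ?thesis using f.subspace_vimage[OF assms] by (simp add: vimage_def)
qed

lemma br_mem_of_homogeneous:
  assumes "graded A" "graded B" "subspace W" "a \<in> A" "b \<in> B"
    and "\<And>x y i j. x \<in> A \<Longrightarrow> x \<in> V i \<Longrightarrow> y \<in> B \<Longrightarrow> y \<in> V j \<Longrightarrow> br x y \<in> W"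
  shows "br a b \<in> W"
proof -
  obtain a0 a1 where a: "a0 \<in> A" "a0 \<in> V False" "a1 \<in> A" "a1 \<in> V True" "a = a0 + a1"
    using gradedD[OF assms(1,4)] .
  obtain b0 b1 where b: "b0 \<in> B" "b0 \<in> V False" "b1 \<in> B" "b1 \<in> V True" "b = b0 + b1"
    using gradedD[OF assms(2,5)] .
  have "br a0 b0 \<in> W" "br a0 b1 \<in> W" "br a1 b0 \<in> W" "br a1 b1 \<in> W"
    using a b assms(6) by blast+
  then show ?thesis
    unfolding a(5) b(5) br_add_left br_add_right by (intro subspace_add[OF assms(3)])
qed

lemma br_mem_swap:
  assumes "graded A" "graded W" "subspace W" "\<And>a w. a \<in> A \<Longrightarrow> w \<in> W \<Longrightarrow> br a w \<in> W"
    and "a \<in> A" "w \<in> W"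
  shows "br w a \<in> W"
  using assms(2,1,3,6,5)
proof (rule br_mem_of_homogeneous)
  fix x y i j assume "x \<in> W" "x \<in> V i" "y \<in> A" "y \<in> V j"
  then have "br y x \<in> W" using assms(4) by blast
  then show "br x y \<in> W"
    using br_supercomm[OF \<open>x \<in> V i\<close> \<open>y \<in> V j\<close>] subspace_neg[OF assms(3)] by (cases "i \<and> j") simp_all
qed

lemma br_mem_brk_sp: "a \<in> A \<Longrightarrow> b \<in> B \<Longrightarrow> br a b \<in> brk_sp sc br A B"
  unfolding brk_sp_def by (rule span_base) blast

lemma subspace_brk_sp: "subspace (brk_sp sc br A B)"
  unfolding brk_sp_def by simp

lemma graded_brk_sp:
  assumes "graded A" "graded B"
  shows "graded (brk_sp sc br A B)"
proof -
  let ?G = "{br a b | a b. a \<in> A \<and> b \<in> B}"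
  let ?H = "{br a b | a b i j. a \<in> A \<and> b \<in> B \<and> a \<in> V i \<and> b \<in> V j}"
  have "?G \<subseteq> span ?H"
  proof
    fix g assume "g \<in> ?G"
    then obtain a b where g: "g = br a b" "a \<in> A" "b \<in> B" by blast
    have "br x y \<in> span ?H" if "x \<in> A" "x \<in> V i" "y \<in> B" "y \<in> V j" for x y i j
      by (rule span_base) (use that in blast)
    then show "g \<in> span ?H" unfolding g(1) by (rule br_mem_of_homogeneous[OF assms subspace_span g(2,3)])
  qed
  moreover have "?H \<subseteq> span ?G" by (rule subset_trans[OF _ span_superset]) blast
  ultimately have "brk_sp sc br A B = span ?H" unfolding brk_sp_def by (simp add: span_eq)
  moreover have "?H \<subseteq> V False \<union> V True"
  proof
    fix h assume "h \<in> ?H"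
    then obtain a b i j where "h = br a b" "a \<in> V i" "b \<in> V j" by blast
    then have "h \<in> V (i \<noteq> j)" using br_grade by blast
    then show "h \<in> V False \<union> V True" by (cases "i \<noteq> j") auto
  qed
  ultimately show ?thesis using graded_span by simp
qed

definition graded_ideal :: "'v set \<Rightarrow> bool" where
  "graded_ideal I \<longleftrightarrow> subspace I \<and> graded I \<and> (\<forall>x. \<forall>q\<in>I. br x q \<in> I)"

lemma graded_ideal_UNIV: "graded_ideal UNIV"
  by (simp add: graded_ideal_def graded_UNIV)

lemma graded_ideal_br_right: "graded_ideal I \<Longrightarrow> q \<in> I \<Longrightarrow> br q x \<in> I"
  unfolding graded_ideal_def using br_mem_swap[OF graded_UNIV] by blast

lemma brk_sp_subset_left: "graded_ideal A \<Longrightarrow> brk_sp sc br A B \<subseteq> A"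
  unfolding brk_sp_def
  by (rule span_minimal) (auto simp: graded_ideal_def intro: graded_ideal_br_right)

lemma graded_ideal_brk_sp:
  assumes A: "graded_ideal A" and B: "graded_ideal B"
  shows "graded_ideal (brk_sp sc br A B)"
  unfolding graded_ideal_def
proof (intro conjI allI ballI subspace_brk_sp)
  show "graded (brk_sp sc br A B)" using A B by (simp add: graded_ideal_def graded_brk_sp)
  let ?W = "brk_sp sc br A B"
  fix x q assume "q \<in> ?W"
  have jacobi: "br x (br a b) \<in> ?W" if "x \<in> V i" "a \<in> A" "a \<in> V k" "b \<in> B" for x a b i k
  proof -
    have "br x a \<in> A" "br x b \<in> B" using A B that by (auto simp: graded_ideal_def)
    then have "br (br x a) b \<in> ?W" "br a (br x b) \<in> ?W" using that by (auto intro: br_mem_brk_sp)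
    then show ?thesis
      using br_jacobi[OF that(1,3), of b] subspace_add[OF subspace_brk_sp] subspace_diff[OF subspace_brk_sp]
      by (cases "i \<and> k") simp_all
  qed
  have "br x (br a b) \<in> ?W" if ab: "a \<in> A" "b \<in> B" for a b
  proof -
    obtain x0 x1 where x: "x0 \<in> V False" "x1 \<in> V True" "x = x0 + x1" using homogeneous_decomp by blast
    obtain a0 a1 where a: "a0 \<in> A" "a0 \<in> V False" "a1 \<in> A" "a1 \<in> V True" "a = a0 + a1"
      using gradedD[OF _ ab(1)] A unfolding graded_ideal_def by blast
    have "br x0 (br a0 b) \<in> ?W" "br x0 (br a1 b) \<in> ?W" "br x1 (br a0 b) \<in> ?W" "br x1 (br a1 b) \<in> ?W"
      using jacobi x a ab(2) by blast+
    then show ?thesis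
      unfolding x(3) a(5) br_add_left br_add_right by (intro subspace_add[OF subspace_brk_sp])
  qed
  then have "{br a b | a b. a \<in> A \<and> b \<in> B} \<subseteq> {v. br x v - sc 0 v \<in> ?W}" by auto
  then have "?W \<subseteq> {v. br x v - sc 0 v \<in> ?W}"
    unfolding brk_sp_def by (rule span_minimal[OF _ subspace_br_preimage[OF subspace_span]])
  then show "br x q \<in> ?W" using \<open>q \<in> ?W\<close> by auto
qed

abbreviation derived :: "'v set" where
  "derived \<equiv> brk_sp sc br UNIV UNIV"

definition central_filtration :: "nat \<Rightarrow> 'v set" where
  "central_filtration j = (case j of 0 \<Rightarrow> UNIV | Suc k \<Rightarrow> lower_central sc br derived k)"

lemma graded_ideal_lower_central: "graded_ideal (lower_central sc br derived k)"
  by (induction k) (simp_all add: graded_ideal_brk_sp graded_ideal_UNIV)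

lemma graded_ideal_central_filtration: "graded_ideal (central_filtration j)"
  by (cases j) (simp_all add: central_filtration_def graded_ideal_UNIV graded_ideal_lower_central)

lemma lower_central_subset_derived: "lower_central sc br derived k \<subseteq> derived"
  by (cases k) (simp_all add: brk_sp_subset_left graded_ideal_brk_sp graded_ideal_UNIV)

lemma br_derived_central_filtration:
  "n \<in> derived \<Longrightarrow> q \<in> central_filtration j \<Longrightarrow> br n q \<in> central_filtration (Suc j)"
  by (cases j) (simp_all add: central_filtration_def br_mem_brk_sp)

lemma br_central_filtration:
  assumes "p \<in> central_filtration j" "p' \<in> central_filtration j"
  shows "br p p' \<in> central_filtration (Suc j)"
proof (cases j)
  case 0
  then show ?thesis by (simp add: central_filtration_def br_mem_brk_sp)
next
  case (Suc k)
  then have "p \<in> derived" using assms(1) lower_central_subset_derived by (auto simp: central_filtration_def)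
  then show ?thesis using br_derived_central_filtration assms(2) by blast
qed

lemma central_filtration_vanishes:
  assumes "completely_solvable sc br"
  obtains n where "central_filtration n = {0}"
proof -
  obtain k where "lower_central sc br derived k = {0}"
    using assms unfolding completely_solvable_def nilpotent_sub_def by blast
  then show thesis using that[of "Suc k"] by (simp add: central_filtration_def)
qed

lemma sub_superalgebra_iff:
  "sub_superalgebra sc V br S \<longleftrightarrow> subspace S \<and> graded S \<and> (\<forall>x\<in>S. \<forall>y\<in>S. br x y \<in> S)"
  unfolding sub_superalgebra_def graded_def ..

lemma sub_superalgebra_set_plus_ideal:
  assumes S: "sub_superalgebra sc V br S" and I: "graded_ideal I"
  shows "sub_superalgebra sc V br (S + I)"
  unfolding sub_superalgebra_iff
proof (intro conjI ballI)
  have S': "subspace S" "graded S" and I': "subspace I" "graded I"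
    using S I by (auto simp: sub_superalgebra_iff graded_ideal_def)
  show "subspace (S + I)" "graded (S + I)" using S' I' by (simp_all add: subspace_set_plus graded_set_plus)
  fix x y assume "x \<in> S + I" "y \<in> S + I"
  then obtain s q s' q' where x: "x = s + q" "s \<in> S" "q \<in> I" and y: "y = s' + q'" "s' \<in> S" "q' \<in> I"
    by (auto elim!: set_plus_elim)
  have "br s s' \<in> S" using S x y by (simp add: sub_superalgebra_iff)
  moreover have "br s q' \<in> I" "br q s' \<in> I" "br q q' \<in> I"
    using I x y graded_ideal_br_right by (auto simp: graded_ideal_def)
  ultimately have "br s s' + (br s q' + br q s' + br q q') \<in> S + I"
    using subspace_add[OF I'(1)] by blast
  then show "br x y \<in> S + I" unfolding x(1) y(1) by (simp add: br_add_left br_add_right algebra_simps)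
qed

lemma br_br_odd: "b \<in> V True \<Longrightarrow> sc 2 (br b (br b v)) = br (br b b) v"
  using br_jacobi[of b True b True v] scale_left_distrib[of 1 1 "br b (br b v)"] by (simp add: eq_diff_eq)

definition graded_stable :: "'v set \<Rightarrow> 'v set \<Rightarrow> bool" where
  "graded_stable M U \<longleftrightarrow> subspace U \<and> graded U \<and> M \<subseteq> U \<and> (\<forall>m\<in>M. \<forall>u\<in>U. br m u \<in> U)"

lemma graded_stableI:
  assumes "subspace U" "graded U" "M \<subseteq> U" "graded M"
    and "\<And>m i u. m \<in> M \<Longrightarrow> m \<in> V i \<Longrightarrow> u \<in> U \<Longrightarrow> br m u \<in> U"
  shows "graded_stable M U"
  unfolding graded_stable_def
proof (intro conjI ballI assms(1-3))
  fix m u assume "m \<in> M" "u \<in> U"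
  then obtain m0 m1 where "m0 \<in> M" "m0 \<in> V False" "m1 \<in> M" "m1 \<in> V True" "m = m0 + m1"
    using gradedD[OF assms(4)] by blast
  then show "br m u \<in> U" using assms(5) \<open>u \<in> U\<close> subspace_add[OF assms(1)] by (simp add: br_add_left)
qed

lemma graded_preimage:
  assumes "graded U" "\<And>x y. f (x + y) = f x + f y" "\<And>i x. x \<in> V i \<Longrightarrow> f x \<in> V (i \<noteq> k)"
  shows "graded {v. f v \<in> U}"
  unfolding graded_def
proof
  fix x assume "x \<in> {v. f v \<in> U}"
  obtain x0 x1 where x: "x0 \<in> V False" "x1 \<in> V True" "x = x0 + x1" using homogeneous_decomp by blast
  have fx: "f x \<in> U" "f x = f x0 + f x1" using \<open>x \<in> _\<close> x(3) assms(2) by auto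
  have grades: "f x0 \<in> V k" "f x1 \<in> V (\<not> k)" using assms(3)[OF x(1)] assms(3)[OF x(2)] by simp_all
  have "f x0 \<in> U \<and> f x1 \<in> U"
  proof (cases k)
    case True
    then show ?thesis
      using graded_components[OF assms(1) fx(1), of "f x1" "f x0"] fx(2) grades by (simp add: add.commute)
  next
    case False
    then show ?thesis using graded_components[OF assms(1) fx(1) _ _ fx(2)] grades by simp
  qed
  then show "\<exists>a\<in>{v. f v \<in> U} \<inter> V False. \<exists>b\<in>{v. f v \<in> U} \<inter> V True. x = a + b" using x by blast
qed

lemma graded_stable_insert:
  assumes U: "graded_stable M U" and v: "v \<in> V i"
    and Mv: "\<And>m. m \<in> M \<Longrightarrow> br m v \<in> span (insert v U)"
  shows "graded_stable M (span (insert v U))"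
  unfolding graded_stable_def
proof (intro conjI ballI)
  have U': "subspace U" "graded U" "M \<subseteq> U" "\<And>m u. m \<in> M \<Longrightarrow> u \<in> U \<Longrightarrow> br m u \<in> U"
    using U by (auto simp: graded_stable_def)
  show "subspace (span (insert v U))" by simp
  have "span U = U" using U'(1) span_eq_iff by blast
  then have "span (insert v U) = span {v} + U"
    unfolding insert_is_Un[of v U] span_Un \<open>span U = U\<close> by (auto simp: set_plus_def)
  moreover have "graded (span {v})" using v by (intro graded_span) (cases i; auto)
  ultimately show "graded (span (insert v U))" using graded_set_plus U'(2) by simp
  show "M \<subseteq> span (insert v U)" using U'(3) span_superset by blast
  fix m w assume m: "m \<in> M" and w: "w \<in> span (insert v U)"
  then obtain k where "w - sc k v \<in> U" unfolding span_insert \<open>span U = U\<close> by blast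
  then have "br m (w - sc k v) \<in> span (insert v U)" using U'(4)[OF m] span_superset by blast
  moreover have "sc k (br m v) \<in> span (insert v U)" using Mv[OF m] span_scale by blast
  ultimately have "br m (w - sc k v) + sc k (br m v) \<in> span (insert v U)" by (rule span_add)
  then show "br m w \<in> span (insert v U)" by (simp add: br_diff_right br_scale_right)
qed

lemma graded_stable_self: "sub_superalgebra sc V br M \<Longrightarrow> graded_stable M M"
  unfolding graded_stable_def sub_superalgebra_iff by blast

lemma sub_superalgebra_of_graded_stable:
  assumes M: "graded M" and H: "graded_stable M H" and MP: "M + P = UNIV"
    and PP: "\<And>p p'. p \<in> P \<Longrightarrow> p' \<in> P \<Longrightarrow> br p p' \<in> M"
  shows "sub_superalgebra sc V br H"
  unfolding sub_superalgebra_iff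
proof (intro conjI ballI)
  have H': "subspace H" "graded H" "M \<subseteq> H" "\<And>m u. m \<in> M \<Longrightarrow> u \<in> H \<Longrightarrow> br m u \<in> H"
    using H by (auto simp: graded_stable_def)
  show "subspace H" "graded H" using H' by simp_all
  fix x y assume x: "x \<in> H" and y: "y \<in> H"
  obtain m p m' p' where mp: "m \<in> M" "p \<in> P" "x = m + p" and mp': "m' \<in> M" "p' \<in> P" "y = m' + p'"
    using MP by (metis UNIV_I set_plus_elim)
  have "p \<in> H" using subspace_diff[OF H'(1) x, of m] mp H'(3) by auto
  have "br m y \<in> H" using H'(4) mp(1) y by blast
  moreover have "br p m' \<in> H"
    using br_mem_swap[OF M H'(2,1) H'(4) mp'(1) \<open>p \<in> H\<close>] .
  moreover have "br p p' \<in> H" using PP mp(2) mp'(2) H'(3) by blast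
  ultimately have "br m y + (br p m' + br p p') \<in> H" using subspace_add[OF H'(1)] by blast
  moreover have "br x y = br m y + (br p m' + br p p')"
    unfolding mp(3) mp'(3) by (simp add: br_add_left br_add_right algebra_simps)
  ultimately show "br x y \<in> H" by simp
qed

context
  fixes M :: "'v set"
  assumes M: "sub_superalgebra sc V br M"
    and derived_acts: "\<And>m m' v. m \<in> M \<Longrightarrow> m' \<in> M \<Longrightarrow> br (br m m') v \<in> M"
begin

text \<open>For odd \<open>x\<close> only \<open>c = 0\<close> keeps the preimage graded.\<close>

lemma graded_stable_eigen_preimage:
  assumes U: "graded_stable M U" and x: "x \<in> M" "x \<in> V k" and c: "k \<Longrightarrow> c = 0"
  shows "graded_stable M {v. br x v - sc c v \<in> U}" (is "graded_stable M ?K")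
proof (rule graded_stableI)
  have U': "subspace U" "graded U" "M \<subseteq> U" "\<And>m u. m \<in> M \<Longrightarrow> u \<in> U \<Longrightarrow> br m u \<in> U"
    using U by (auto simp: graded_stable_def)
  show "subspace ?K" by (rule subspace_br_preimage[OF U'(1)])
  show "graded M" using M by (simp add: sub_superalgebra_iff)
  show "graded ?K"
  proof (rule graded_preimage[OF U'(2)])
    show "br x (v + w) - sc c (v + w) = (br x v - sc c v) + (br x w - sc c w)" for v w
      by (simp add: br_add_right scale_right_distrib algebra_simps)
    show "br x v - sc c v \<in> V (i \<noteq> k)" if "v \<in> V i" for i v
      using br_grade[OF x(2) that] subspace_diff[OF V_subspace] subspace_scale[OF V_subspace that] c
      by (cases k) (auto simp: eq_commute[of i])
  qed
  show "M \<subseteq> ?K"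
  proof
    fix m assume "m \<in> M"
    then have "br x m \<in> U" "sc c m \<in> U"
      using M U'(3) subspace_scale[OF U'(1)] x(1) by (auto simp: sub_superalgebra_iff)
    then show "m \<in> ?K" using subspace_diff[OF U'(1)] by simp
  qed
  fix m j v assume m: "m \<in> M" "m \<in> V j" and v: "v \<in> ?K"
  have "br x (br m v) - sc c (br m v) =
      br (br x m) v + (if k \<and> j then - br m (br x v - sc c v) else br m (br x v - sc c v))"
    using br_jacobi[OF x(2) m(2), of v] c by (cases k) (simp_all add: br_diff_right br_scale_right)
  moreover have "br (br x m) v \<in> U" "br m (br x v - sc c v) \<in> U"
    using derived_acts[OF x(1) m(1)] U'(3,4) m(1) v by auto
  ultimately show "br m v \<in> ?K"
    using subspace_add[OF U'(1)] subspace_diff[OF U'(1)] by (cases "k \<and> j") simp_all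
qed

lemma graded_stable_extend_eigen:
  assumes U: "graded_stable M U" and x: "x \<in> M" "x \<in> V k" and c: "k \<Longrightarrow> c = 0"
    and v: "v \<notin> U" "br x v - sc c v \<in> U" and w: "br x w - sc c w \<notin> U"
  shows "\<exists>U'. graded_stable M U' \<and> U \<subset> U' \<and> U' \<noteq> UNIV"
proof (intro exI conjI)
  let ?K = "{v. br x v - sc c v \<in> U}"
  show "graded_stable M ?K" by (rule graded_stable_eigen_preimage[OF U x c])
  have "subspace U" "\<And>u. u \<in> U \<Longrightarrow> br x u \<in> U" using U x(1) by (auto simp: graded_stable_def)
  then have "U \<subseteq> ?K" by (auto intro: subspace_diff subspace_scale)
  then show "U \<subset> ?K" using v by blast
  show "?K \<noteq> UNIV" using w by blast
qed

end

end

locale fd_lie_superalgebra_acf = fd_lie_superalgebra sc Basis V br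
  for sc :: "'k::field \<Rightarrow> 'v::ab_group_add \<Rightarrow> 'v" and Basis V br +
  assumes alg_closed: "alg_closed_field TYPE('k)" and two_neq_0: "(2::'k) \<noteq> 0"
begin

context
  fixes M :: "'v set"
  assumes M: "sub_superalgebra sc V br M"
    and derived_acts: "\<And>m m' v. m \<in> M \<Longrightarrow> m' \<in> M \<Longrightarrow> br (br m m') v \<in> M"
begin

lemma graded_stable_extend:
  assumes U: "graded_stable M U" and "U \<noteq> UNIV" and codim: "dim (UNIV :: 'v set) \<noteq> dim U + 1"
  shows "\<exists>U'. graded_stable M U' \<and> U \<subset> U' \<and> U' \<noteq> UNIV"
proof -
  have U': "subspace U" "graded U" "M \<subseteq> U" using U by (auto simp: graded_stable_def)
  consider (even) m where "m \<in> M" "m \<in> V False" "\<forall>c. \<exists>w. br m w - sc c w \<notin> U"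
    | (odd) b w where "b \<in> M" "b \<in> V True" "br b w \<notin> U"
    | (scalar) "\<forall>m\<in>M \<inter> V False. \<exists>c. \<forall>w. br m w - sc c w \<in> U" "\<forall>b\<in>M \<inter> V True. \<forall>w. br b w \<in> U"
    by blast
  then show ?thesis
  proof cases
    case even
    have "Vector_Spaces.linear sc sc (br m)" using linear_br_minus_scale[of m 0] by simp
    then obtain v c where v: "v \<notin> U" "br m v - sc c v \<in> U"
      using exists_eigenvector_mod_subspace[OF alg_closed _ U'(1) \<open>U \<noteq> UNIV\<close>] by blast
    obtain w where "br m w - sc c w \<notin> U" using even(3) by blast
    with v show ?thesis using graded_stable_extend_eigen[OF M derived_acts U even(1,2)] by simp
  next
    case odd
    have "br (br b b) w \<in> U" using derived_acts[OF odd(1,1)] U'(3) by blast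
    then have "sc (inverse 2) (sc 2 (br b (br b w))) \<in> U"
      unfolding br_br_odd[OF odd(2)] by (rule subspace_scale[OF U'(1)])
    then have "br b (br b w) \<in> U" using two_neq_0 by simp
    then show ?thesis
      using graded_stable_extend_eigen[OF M derived_acts U odd(1,2), of 0 "br b w" w] odd(3) by simp
  next
    case scalar
    obtain x where "x \<notin> U" using \<open>U \<noteq> UNIV\<close> by blast
    moreover obtain x0 x1 where "x0 \<in> V False" "x1 \<in> V True" "x = x0 + x1"
      using homogeneous_decomp by blast
    ultimately obtain v i where v: "v \<notin> U" "v \<in> V i" using subspace_add[OF U'(1)] by blast
    let ?U' = "span (insert v U)"
    have "br m v \<in> ?U'" if "m \<in> M" for m
    proof -
      obtain m0 m1 where m: "m0 \<in> M" "m0 \<in> V False" "m1 \<in> M" "m1 \<in> V True" "m = m0 + m1"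
        using M \<open>m \<in> M\<close> gradedD unfolding sub_superalgebra_iff by blast
      then obtain c where "br m0 v - sc c v \<in> U" "br m1 v \<in> U" using scalar by blast
      then have "br m0 v - sc c v \<in> ?U'" "sc c v \<in> ?U'" "br m1 v \<in> ?U'"
        using span_superset span_base span_scale by blast+
      then have "(br m0 v - sc c v) + sc c v + br m1 v \<in> ?U'" by (intro span_add)
      then show ?thesis by (simp add: m(5) br_add_left)
    qed
    then have "graded_stable M ?U'" by (rule graded_stable_insert[OF U v(2)])
    moreover have "U \<subset> ?U'" using v(1) span_superset[of "insert v U"] by blast
    moreover have "?U' \<noteq> UNIV"
    proof -
      have "v \<notin> span U" using v(1) U'(1) span_eq_iff by blast
      then have "dim ?U' = dim U + 1" by (simp add: dim_span dim_insert)
      with codim show ?thesis by metis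
    qed
    ultimately show ?thesis by blast
  qed
qed

lemma graded_stable_hyperplane_superset:
  assumes "graded_stable M U" "U \<noteq> UNIV"
  shows "\<exists>H. graded_stable M H \<and> U \<subseteq> H \<and> dim (UNIV :: 'v set) = dim H + 1"
  using assms(1,2)
proof (induction "dim (UNIV :: 'v set) - dim U" arbitrary: U rule: less_induct)
  case less
  show ?case
  proof (cases "dim (UNIV :: 'v set) = dim U + 1")
    case False
    then obtain U' where U': "graded_stable M U'" "U \<subset> U'" "U' \<noteq> UNIV"
      using graded_stable_extend less.prems by blast
    have spans: "span U = U" "span U' = U'"
      using U'(1) less.prems(1) span_eq_iff unfolding graded_stable_def by blast+
    have "dim U < dim U'" by (rule dim_psubset) (unfold spans, rule U'(2))
    moreover have "dim U' \<le> dim (UNIV :: 'v set)" by (rule dim_subset) simp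
    ultimately have "dim (UNIV :: 'v set) - dim U' < dim (UNIV :: 'v set) - dim U" by linarith
    then show ?thesis using less.hyps U' by blast
  qed (use less.prems in blast)
qed

end

lemma exists_hyperplane_sub_superalgebra_of_filtration_step:
  assumes S: "sub_superalgebra sc V br S"
    and top: "S + central_filtration j = UNIV" and ne: "S + central_filtration (Suc j) \<noteq> UNIV"
  shows "\<exists>T. sub_superalgebra sc V br T \<and> S \<subseteq> T \<and> dim (UNIV :: 'v set) = dim T + 1"
proof -
  let ?C = central_filtration and ?M = "S + central_filtration (Suc j)"
  have M: "sub_superalgebra sc V br ?M"
    by (rule sub_superalgebra_set_plus_ideal[OF S graded_ideal_central_filtration])
  then have M': "subspace ?M" "\<And>x y. x \<in> ?M \<Longrightarrow> y \<in> ?M \<Longrightarrow> br x y \<in> ?M"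
    by (simp_all add: sub_superalgebra_iff)
  have "0 \<in> S" "0 \<in> ?C (Suc j)"
    using S graded_ideal_central_filtration[of "Suc j"]
    by (simp_all add: sub_superalgebra_iff graded_ideal_def subspace_0)
  then have SM: "S \<subseteq> ?M" and CM: "?C (Suc j) \<subseteq> ?M"
    using set_plus_intro[of _ S 0 "?C (Suc j)"] set_plus_intro[of 0 S] by auto
  have acts: "br (br m m') v \<in> ?M" if "m \<in> ?M" "m' \<in> ?M" for m m' v
  proof -
    have "v \<in> S + ?C j" using top by simp
    then obtain s p where v: "v = s + p" "s \<in> S" "p \<in> ?C j" by (rule set_plus_elim)
    have "br (br m m') s \<in> ?M" using M'(2) that SM v(2) by blast
    moreover have "br (br m m') p \<in> ?M"
      using br_derived_central_filtration[OF br_mem_brk_sp v(3)] CM by blast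
    ultimately show ?thesis unfolding v(1) br_add_right by (rule subspace_add[OF M'(1)])
  qed
  obtain H where H: "graded_stable ?M H" "?M \<subseteq> H" "dim (UNIV :: 'v set) = dim H + 1"
    using graded_stable_hyperplane_superset[OF M acts graded_stable_self[OF M] ne] by blast
  have "?M + ?C j = UNIV" using top set_plus_mono2[OF SM order_refl] by blast
  moreover have "br p p' \<in> ?M" if "p \<in> ?C j" "p' \<in> ?C j" for p p'
    using br_central_filtration[OF that] CM by blast
  moreover have "graded ?M" using M by (simp add: sub_superalgebra_iff)
  ultimately have "sub_superalgebra sc V br H" using sub_superalgebra_of_graded_stable H(1) by blast
  then show ?thesis using H SM by blast
qed

lemma exists_hyperplane_sub_superalgebra:
  assumes "completely_solvable sc br" "sub_superalgebra sc V br S" "S \<noteq> UNIV"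
  shows "\<exists>T. sub_superalgebra sc V br T \<and> S \<subseteq> T \<and> dim (UNIV :: 'v set) = dim T + 1"
proof -
  have "0 \<in> S" using assms(2) by (simp add: sub_superalgebra_iff subspace_0)
  obtain n where "central_filtration n = {0}" using central_filtration_vanishes[OF assms(1)] .
  then have "S + central_filtration n \<noteq> UNIV" using assms(3) by simp
  moreover have "S + central_filtration 0 = UNIV"
    using \<open>0 \<in> S\<close> by (force simp: central_filtration_def set_plus_def)
  ultimately obtain j where "S + central_filtration j = UNIV" "S + central_filtration (Suc j) \<noteq> UNIV"
    using ex_least_nat_less[of "\<lambda>k. S + central_filtration k \<noteq> UNIV" n] by blast
  then show ?thesis by (rule exists_hyperplane_sub_superalgebra_of_filtration_step[OF assms(2)])
qed

end

lemma finite_dimensional_vector_space_of_fin_dim: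
  assumes "vector_space sc" "fin_dim sc"
  obtains B where "finite_dimensional_vector_space sc B"
proof -
  interpret vector_space sc by fact
  obtain B0 where B0: "finite B0" "span B0 = UNIV" using assms(2) unfolding fin_dim_def by blast
  obtain B where B: "independent B" "UNIV \<subseteq> span B" using basis_exists[of UNIV] by blast
  then have "finite B" using independent_span_bound[OF B0(1) B(1)] B0(2) by simp
  with B show thesis by (intro that) (unfold_locales, auto)
qed

lemma two_neq_0_of_CHAR_gt_2:
  assumes "CHAR('a::semiring_1) > 2"
  shows "(2::'a) \<noteq> 0"
proof
  assume "(2::'a) = 0"
  then have "CHAR('a) dvd 2" using of_nat_eq_0_iff_char_dvd[of 2, where 'a='a] by simp
  then show False using assms by (simp add: nat_dvd_not_less)
qed

theorem lemma5p1:
  fixes sc :: "'k::field \<Rightarrow> 'v::ab_group_add \<Rightarrow> 'v"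
    and V :: "bool \<Rightarrow> 'v set"
    and br :: "'v \<Rightarrow> 'v \<Rightarrow> 'v"
    and S :: "'v set"
  assumes "alg_closed_field TYPE('k)"
    and "CHAR('k) > 2"
    and "lie_superalgebra sc V br"
    and "fin_dim sc"
    and "completely_solvable sc br"
    and "sub_superalgebra sc V br S"
    and "S \<noteq> UNIV"
  shows "\<exists>T. sub_superalgebra sc V br T \<and> S \<subseteq> T \<and>
           vector_space.dim sc (UNIV :: 'v set) = vector_space.dim sc T + 1"
proof -
  have "vector_space sc" using assms(3) unfolding lie_superalgebra_def by (elim conjE)
  then obtain B where "finite_dimensional_vector_space sc B"
    using assms(4) by (rule finite_dimensional_vector_space_of_fin_dim)
  then interpret fd_lie_superalgebra_acf sc B V br
    unfolding fd_lie_superalgebra_acf_def fd_lie_superalgebra_acf_axioms_def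
    using fd_lie_superalgebraI[OF assms(3)] assms(1) two_neq_0_of_CHAR_gt_2[OF assms(2)] by blast
  show ?thesis by (rule exists_hyperplane_sub_superalgebra[OF assms(5-7)])
qed

end
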